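(* For every integer $r\ge2$, $$ \begin{aligned} \int_0^{\frac\pi2} \theta^{r-2}\log\left(\cos\frac\theta2\right)d\theta &=-\frac{\log2}{r-1}\left(\frac\pi2\right)^{r-1}+(r-2)!\sin\left(\frac{r\pi}{2}\right)\zeta_E(r) \\ &\quad+\sum_{k=0}^{\lfloor \frac{r-2}{2}\rfloor }(-1)^k(2k)!\binom{r-2}{2k}\left(\frac\pi2\right)^{r-2k-2}\beta(2k+2) \\ &\quad+\sum_{k=1}^{\lceil \frac{r-2}2\rceil}\frac{(-1)^{k-1}(2k-1)!}{2^{2k+1}}\binom{r-2}{2k-1}\left(\frac\pi2\right)^{r-2k-1}\zeta_E(2k+1). \end{aligned} $$
   Context: $\zeta_E(s)=\sum_{n=1}^\infty\frac{(-1)^{n+1}}{n^s}=(1-2^{1-s})\zeta(s)$ (alternating zeta function), $\beta(s)=\sum_{n=0}^\infty\frac{(-1)^n}{(2n+1)^s}$ (Dirichlet beta function). $\lfloor\cdot\rfloor$, $\lceil\cdot\rceil$ are floor and ceiling; an empty sum is $0$. *)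

theory Defs
  imports "HOL-Analysis.Analysis"
begin

definition zeta_E :: "real \<Rightarrow> real" where
  "zeta_E s = (\<Sum>n. (-1) ^ n / (real (n + 1)) powr s)"

definition dbeta :: "real \<Rightarrow> real" where
  "dbeta s = (\<Sum>n. (-1) ^ n / (real (2 * n + 1)) powr s)"

end

theory Submission
  imports Defs
begin

text \<open>Write \<open>m = r - 2\<close>. Since
  \<open>ln (2 cos (t/2)) = ln \<bar>1 + e\<^sup>i\<^sup>t\<bar> = \<Sum>\<^sub>n\<^sub>\<ge>\<^sub>1 (-1)\<^sup>n\<^sup>+\<^sup>1 cos (n t) / n\<close>, the integral is
  \<open>-ln 2 (\<pi>/2)\<^sup>m\<^sup>+\<^sup>1/(m+1)\<close> plus the series of the moments
  \<open>(-1)\<^sup>n\<^sup>+\<^sup>1/n \<integral>\<^sub>0\<^sup>\<pi>\<^sup>/\<^sup>2 t\<^sup>m cos (n t) dt\<close>. Term-by-term integration is justified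
  by Abel's method: for \<open>\<rho> < 1\<close> the series of \<open>ln \<bar>1 + \<rho> e\<^sup>i\<^sup>t\<bar>\<close> converges dominatedly,
  and both sides are continuous as \<open>\<rho> \<rightarrow> 1\<close> because the moments are \<open>O(1/n\<^sup>2)\<close>.
  Repeated integration by parts evaluates each moment as a finite sum of terms
  \<open>sin ((n - j)\<pi>/2) / n\<^sup>j\<^sup>+\<^sup>1\<close>, \<open>j \<le> m\<close>, plus a boundary term at \<open>t = 0\<close> that yields the
  \<open>\<zeta>\<^sub>E(r)\<close> term. In the former the sine kills every other \<open>n\<close>, so summing over \<open>n\<close>
  gives \<open>\<plusminus>\<beta>(j+2)\<close> for even \<open>j\<close> and \<open>\<plusminus>\<zeta>\<^sub>E(j+2)/2\<^sup>j\<^sup>+\<^sup>2\<close> for odd \<open>j\<close>.\<close>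

text \<open>Integration by parts, using \<open>cos (x t + p) = - sin (x t + (p - \<pi>/2))\<close>.\<close>
fun pow_sin_antideriv :: "real \<Rightarrow> nat \<Rightarrow> real \<Rightarrow> real \<Rightarrow> real" where
  "pow_sin_antideriv x 0 p t = - cos (x * t + p) / x"
| "pow_sin_antideriv x (Suc m) p t =
     - (t ^ Suc m * cos (x * t + p)) / x - real (Suc m) / x * pow_sin_antideriv x m (p - pi/2) t"

lemma has_real_derivative_pow_sin_antideriv:
  assumes "x \<noteq> 0"
  shows "(pow_sin_antideriv x m p has_real_derivative t ^ m * sin (x * t + p)) (at t)"
proof (induction m arbitrary: p)
  case 0
  show ?case
    by (auto intro!: derivative_eq_intros simp: assms)
next
  case (Suc m)
  have shift: "sin (x * t + (p - pi/2)) = - cos (x * t + p)"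
  proof -
    have "x * t + (p - pi/2) = (x * t + p) - pi/2" by simp
    then show ?thesis by (simp only: sin_diff) simp
  qed
  have "((\<lambda>t. - (t ^ Suc m * cos (x * t + p)) / x - real (Suc m) / x * pow_sin_antideriv x m (p - pi/2) t)
      has_real_derivative - (real (Suc m) * t ^ m * cos (x * t + p) - t ^ Suc m * (sin (x * t + p) * x)) / x
      - real (Suc m) / x * (t ^ m * sin (x * t + (p - pi/2)))) (at t)"
    by (rule derivative_eq_intros Suc[of "p - pi/2"] refl | simp add: assms)+
       (cases m, auto simp: algebra_simps)
  moreover have "- (real (Suc m) * t ^ m * cos (x * t + p) - t ^ Suc m * (sin (x * t + p) * x)) / x
      - real (Suc m) / x * (t ^ m * sin (x * t + (p - pi/2))) = t ^ Suc m * sin (x * t + p)"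
    unfolding shift using assms by (simp add: field_simps)
  ultimately show ?case by (simp add: fun_eq_iff)
qed

lemma pow_sin_antideriv_eq:
  "pow_sin_antideriv x m p t =
     (\<Sum>j\<le>m. (-1) ^ j * fact j * real (m choose j) * t ^ (m - j)
                * sin (x * t + p - (real j + 1) * pi/2) / x ^ (j + 1))"
proof (induction m arbitrary: p)
  case 0
  then show ?case by (simp add: sin_diff)
next
  case (Suc m)
  have step: "(-1) ^ Suc j * fact (Suc j) * real (Suc m choose Suc j) * t ^ (m - j)
        * sin (x * t + p - (real (Suc j) + 1) * pi/2) / x ^ (Suc j + 1)
      = - (real (Suc m) / x * ((-1) ^ j * fact j * real (m choose j) * t ^ (m - j)
        * sin (x * t + (p - pi/2) - (real j + 1) * pi/2) / x ^ (j + 1)))" for j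
  proof -
    have "real (Suc m choose Suc j) * real (Suc j) = real (Suc m) * real (m choose j)"
      by (metis Suc_times_binomial_eq of_nat_mult mult.commute)
    then have binom: "real (Suc m choose Suc j) = real (Suc m) * real (m choose j) / real (Suc j)"
      by (simp add: field_simps del: binomial_Suc_Suc of_nat_Suc)
    have angle: "x * t + p - (real (Suc j) + 1) * pi/2 = x * t + (p - pi/2) - (real j + 1) * pi/2"
      by (simp add: algebra_simps)
    show ?thesis
      unfolding angle fact_Suc binom by (simp add: field_simps del: binomial_Suc_Suc of_nat_Suc)
  qed
  have "(\<Sum>j\<le>Suc m. (-1) ^ j * fact j * real (Suc m choose j) * t ^ (Suc m - j)
          * sin (x * t + p - (real j + 1) * pi/2) / x ^ (j + 1))
      = - (t ^ Suc m * cos (x * t + p)) / x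
        + (\<Sum>j\<le>m. (-1) ^ Suc j * fact (Suc j) * real (Suc m choose Suc j) * t ^ (m - j)
          * sin (x * t + p - (real (Suc j) + 1) * pi/2) / x ^ (Suc j + 1))"
    by (subst sum.atMost_Suc_shift) (simp add: sin_diff)
  also have "\<dots> = pow_sin_antideriv x (Suc m) p t"
    by (simp only: step sum_negf flip: sum_distrib_left) (simp add: Suc[of "p - pi/2"])
  finally show ?case ..
qed

definition moment_coeff :: "nat \<Rightarrow> nat \<Rightarrow> real" where
  "moment_coeff m j = (-1) ^ j * fact j * real (m choose j) * (pi/2) ^ (m - j)"

lemma integral_pow_cos:
  assumes "n > 0"
  shows "integral {0..pi/2} (\<lambda>t. t ^ m * cos (real n * t)) =
    (\<Sum>j\<le>m. moment_coeff m j * sin ((real n - real j) * pi/2) / real n ^ (j + 1))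
    + (-1) ^ m * fact m * sin (real m * pi/2) / real n ^ (m + 1)"
proof -
  let ?F = "pow_sin_antideriv (real n) m (pi/2)"
  have "((\<lambda>t. t ^ m * sin (real n * t + pi/2)) has_integral ?F (pi/2) - ?F 0) {0..pi/2}"
  proof (rule fundamental_theorem_of_calculus)
    fix t :: real
    have "(?F has_real_derivative t ^ m * sin (real n * t + pi/2)) (at t)"
      using assms by (intro has_real_derivative_pow_sin_antideriv) simp
    then show "(?F has_vector_derivative t ^ m * sin (real n * t + pi/2)) (at t within {0..pi/2})"
      by (simp add: has_real_derivative_iff_has_vector_derivative has_vector_derivative_at_within)
  qed simp
  then have "integral {0..pi/2} (\<lambda>t. t ^ m * cos (real n * t)) = ?F (pi/2) - ?F 0"
    by (simp add: sin_add cos_add integral_unique)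
  moreover have "?F (pi/2) = (\<Sum>j\<le>m. moment_coeff m j * sin ((real n - real j) * pi/2) / real n ^ (j + 1))"
  proof -
    have "real n * (pi/2) + pi/2 - (real j + 1) * pi/2 = (real n - real j) * pi/2" for j
      by (simp add: algebra_simps)
    then show ?thesis by (simp only: pow_sin_antideriv_eq moment_coeff_def)
  qed
  moreover have "?F 0 = - ((-1) ^ m * fact m * sin (real m * pi/2) / real n ^ (m + 1))"
  proof -
    have "?F 0 = (-1) ^ m * fact m * sin (pi/2 - (real m + 1) * pi/2) / real n ^ (m + 1)"
      unfolding pow_sin_antideriv_eq by (subst sum.remove[of _ m]) (auto intro!: sum.neutral)
    also have "pi/2 - (real m + 1) * pi/2 = - (real m * pi/2)"
      by (simp add: algebra_simps)
    finally show ?thesis by simp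
  qed
  ultimately show ?thesis by simp
qed

text \<open>The \<open>n\<close>-th term of \<open>\<zeta>\<^sub>E(s)\<close>, indexed from \<open>n = 1\<close>; for \<open>s > 0\<close> the junk term at
  \<open>n = 0\<close> is \<open>0\<close> because \<open>x / 0 = 0\<close>.\<close>
definition eta_term :: "nat \<Rightarrow> nat \<Rightarrow> real" where
  "eta_term s n = (-1) ^ Suc n / real n ^ s"

lemma summable_abs_mult_eta_term:
  assumes "\<And>n. \<bar>f n\<bar> \<le> 1" "2 \<le> s"
  shows "summable (\<lambda>n. \<bar>f n * eta_term s n\<bar>)"
proof (rule summable_comparison_test[OF _ inverse_power_summable[OF assms(2)]])
  have "\<bar>f n * eta_term s n\<bar> \<le> inverse (real n ^ s)" for n
    using mult_right_mono[OF assms(1)[of n], of "inverse (real n ^ s)"]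
    by (simp add: eta_term_def abs_mult divide_inverse power_abs)
  then show "\<exists>N. \<forall>n\<ge>N. norm \<bar>f n * eta_term s n\<bar> \<le> inverse (real n ^ s)"
    by simp
qed

lemma summable_eta_term: "2 \<le> s \<Longrightarrow> summable (eta_term s)"
  using summable_abs_mult_eta_term[of "\<lambda>_. 1" s] by (simp add: summable_norm_cancel)

lemma summable_sin_mult_eta_term: "2 \<le> s \<Longrightarrow> summable (\<lambda>n. sin (f n) * eta_term s n)"
  using summable_abs_mult_eta_term[of "\<lambda>n. sin (f n)" s] by (simp add: summable_norm_cancel)

lemma suminf_eta_term:
  assumes "2 \<le> s"
  shows "(\<Sum>n. eta_term s n) = zeta_E (real s)"
proof -
  have "summable (eta_term s)"
    using assms by (rule summable_eta_term)
  moreover have "eta_term s 0 = 0"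
    using assms by (simp add: eta_term_def)
  ultimately have "(\<Sum>n. eta_term s n) = (\<Sum>n. eta_term s (Suc n))"
    by (simp add: suminf_split_head)
  also have "\<dots> = zeta_E (real s)"
    unfolding zeta_E_def eta_term_def
    by (rule arg_cong[where f = suminf], rule ext) (simp add: powr_realpow del: of_nat_Suc)
  finally show ?thesis .
qed

definition log_series_moment :: "nat \<Rightarrow> nat \<Rightarrow> real" where
  "log_series_moment m n = (-1) ^ Suc n / real n * integral {0..pi/2} (\<lambda>t. t ^ m * cos (real n * t))"

lemma log_series_moment_eq:
  "log_series_moment m n =
    (\<Sum>j\<le>m. moment_coeff m j * (sin ((real n - real j) * pi/2) * eta_term (j + 2) n))
    + (-1) ^ m * fact m * sin (real m * pi/2) * eta_term (m + 2) n"
proof (cases "n = 0")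
  case True
  then show ?thesis by (simp add: log_series_moment_def eta_term_def)
next
  case False
  then show ?thesis
    unfolding log_series_moment_def integral_pow_cos[OF False[unfolded neq0_conv]]
    by (simp add: eta_term_def distrib_left sum_distrib_left mult_ac)
qed

lemma summable_abs_log_series_moment: "summable (\<lambda>n. \<bar>log_series_moment m n\<bar>)"
proof (rule summable_comparison_test)
  let ?g = "\<lambda>n. (\<Sum>j\<le>m. \<bar>moment_coeff m j\<bar> * \<bar>sin ((real n - real j) * pi/2) * eta_term (j + 2) n\<bar>)
    + \<bar>(-1) ^ m * fact m * sin (real m * pi/2)\<bar> * \<bar>1 * eta_term (m + 2) n\<bar>"
  show "summable ?g"
    by (intro summable_add summable_sum summable_mult summable_abs_mult_eta_term) auto
  show "\<exists>N. \<forall>n\<ge>N. norm \<bar>log_series_moment m n\<bar> \<le> ?g n"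
  proof (intro exI allI impI)
    fix n
    have "\<bar>\<Sum>j\<le>m. moment_coeff m j * (sin ((real n - real j) * pi/2) * eta_term (j + 2) n)\<bar>
        \<le> (\<Sum>j\<le>m. \<bar>moment_coeff m j\<bar> * \<bar>sin ((real n - real j) * pi/2) * eta_term (j + 2) n\<bar>)"
      by (rule order.trans[OF sum_abs]) (simp add: abs_mult)
    then show "norm \<bar>log_series_moment m n\<bar> \<le> ?g n"
      unfolding log_series_moment_eq real_norm_def abs_abs
      by (rule order.trans[OF abs_triangle_ineq add_mono]) (simp add: abs_mult)
  qed
qed

lemma suminf_log_series_moment:
  "(\<Sum>n. log_series_moment m n) =
    (\<Sum>j\<le>m. moment_coeff m j * (\<Sum>n. sin ((real n - real j) * pi/2) * eta_term (j + 2) n))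
    + (-1) ^ m * fact m * sin (real m * pi/2) * zeta_E (real (m + 2))"
proof -
  have summable: "summable (\<lambda>n. sin ((real n - real j) * pi/2) * eta_term (j + 2) n)" for j
    by (rule summable_sin_mult_eta_term) simp
  have summable_eta: "summable (eta_term (m + 2))"
    by (simp add: summable_eta_term)
  have "(\<Sum>n. log_series_moment m n) =
      (\<Sum>n. \<Sum>j\<le>m. moment_coeff m j * (sin ((real n - real j) * pi/2) * eta_term (j + 2) n))
      + (\<Sum>n. (-1) ^ m * fact m * sin (real m * pi/2) * eta_term (m + 2) n)"
    unfolding log_series_moment_eq
    by (intro suminf_add[symmetric] summable_sum summable_mult summable summable_eta)
  also have "(\<Sum>n. \<Sum>j\<le>m. moment_coeff m j * (sin ((real n - real j) * pi/2) * eta_term (j + 2) n))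
      = (\<Sum>j\<le>m. moment_coeff m j * (\<Sum>n. sin ((real n - real j) * pi/2) * eta_term (j + 2) n))"
    by (subst suminf_sum, rule summable_mult[OF summable], rule sum.cong[OF refl],
        rule suminf_mult[OF summable])
  also have "(\<Sum>n. (-1) ^ m * fact m * sin (real m * pi/2) * eta_term (m + 2) n)
      = (-1) ^ m * fact m * sin (real m * pi/2) * zeta_E (real (m + 2))"
    by (subst suminf_mult[OF summable_eta]) (simp add: suminf_eta_term)
  finally show ?thesis .
qed

lemma sin_of_nat_diff_times_pi: "sin ((real a - real b) * pi) = 0"
  by (simp add: left_diff_distrib sin_diff)

lemma cos_of_nat_diff_times_pi: "cos ((real a - real b) * pi) = (-1) ^ (a + b)"
  by (simp add: left_diff_distrib cos_diff power_add)

lemma sum_block_of_two: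
  fixes f :: "nat \<Rightarrow> 'a::comm_monoid_add"
  shows "(\<Sum>n\<in>{p * 2..<p * 2 + 2}. f n) = f (2 * p) + f (2 * p + 1)"
  by (simp add: numeral_2_eq_2 mult.commute)

lemma suminf_sin_eta_term_even:
  "(\<Sum>n. sin ((real n - real (2 * k)) * pi/2) * eta_term (2 * k + 2) n) = (-1) ^ k * dbeta (real (2 * k + 2))"
proof -
  let ?u = "\<lambda>n. sin ((real n - real (2 * k)) * pi/2) * eta_term (2 * k + 2) n"
  have "summable ?u"
    by (rule summable_sin_mult_eta_term) simp
  then have "(\<lambda>p. \<Sum>n\<in>{p * 2..<p * 2 + 2}. ?u n) sums (\<Sum>n. ?u n)"
    by (intro sums_group) (simp_all add: summable_sums)
  moreover have "(\<Sum>n\<in>{p * 2..<p * 2 + 2}. ?u n) = (-1) ^ k * ((-1) ^ p / real (2 * p + 1) powr real (2 * k + 2))"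
    for p
  proof -
    have "(real (2 * p) - real (2 * k)) * pi/2 = (real p - real k) * pi"
      by (simp add: field_simps)
    then have even: "?u (2 * p) = 0"
      by (simp only: sin_of_nat_diff_times_pi mult_zero_left)
    have "(real (2 * p + 1) - real (2 * k)) * pi/2 = (real p - real k) * pi + pi/2"
      by (simp add: field_simps)
    then have odd: "?u (2 * p + 1) = (-1) ^ (p + k) / real (2 * p + 1) ^ (2 * k + 2)"
      by (simp only: sin_add sin_of_nat_diff_times_pi cos_of_nat_diff_times_pi) (simp add: eta_term_def)
    show ?thesis
      unfolding sum_block_of_two even odd by (simp add: powr_realpow power_add del: of_nat_Suc)
  qed
  ultimately have "(\<lambda>p. (-1) ^ k * ((-1) ^ p / real (2 * p + 1) powr real (2 * k + 2))) sums (\<Sum>n. ?u n)"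
    by simp
  then have "(\<lambda>p. (-1) ^ p / real (2 * p + 1) powr real (2 * k + 2)) sums ((\<Sum>n. ?u n) / (-1) ^ k)"
    by (rule sums_mult_D) simp
  then show ?thesis
    unfolding dbeta_def by (simp add: sums_unique[symmetric])
qed

lemma suminf_sin_eta_term_odd:
  "(\<Sum>n. sin ((real n - real (2 * k + 1)) * pi/2) * eta_term (2 * k + 3) n)
    = (-1) ^ Suc k * zeta_E (real (2 * k + 3)) / 2 ^ (2 * k + 3)"
proof -
  let ?u = "\<lambda>n. sin ((real n - real (2 * k + 1)) * pi/2) * eta_term (2 * k + 3) n"
  let ?c = "(-1) ^ Suc k / 2 ^ (2 * k + 3) :: real"
  have "summable ?u"
    by (rule summable_sin_mult_eta_term) simp
  then have "(\<lambda>p. \<Sum>n\<in>{p * 2..<p * 2 + 2}. ?u n) sums (\<Sum>n. ?u n)"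
    by (intro sums_group) (simp_all add: summable_sums)
  moreover have "(\<Sum>n\<in>{p * 2..<p * 2 + 2}. ?u n) = ?c * eta_term (2 * k + 3) p" for p
  proof -
    have "(real (2 * p) - real (2 * k + 1)) * pi/2 = (real p - real k) * pi - pi/2"
      by (simp add: field_simps)
    moreover have "real (2 * p) ^ (2 * k + 3) = 2 ^ (2 * k + 3) * real p ^ (2 * k + 3)"
      by (simp add: power_mult_distrib)
    ultimately have even: "?u (2 * p) = ?c * eta_term (2 * k + 3) p"
      by (simp only: sin_diff sin_of_nat_diff_times_pi cos_of_nat_diff_times_pi eta_term_def)
         (simp add: power_add field_simps)
    have "(real (2 * p + 1) - real (2 * k + 1)) * pi/2 = (real p - real k) * pi"
      by (simp add: field_simps)
    then have odd: "?u (2 * p + 1) = 0"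
      by (simp only: sin_of_nat_diff_times_pi mult_zero_left)
    show ?thesis
      unfolding sum_block_of_two even odd by simp
  qed
  ultimately have "(\<Sum>n. ?u n) = (\<Sum>p. ?c * eta_term (2 * k + 3) p)"
    by (simp add: sums_unique)
  also have "\<dots> = ?c * zeta_E (real (2 * k + 3))"
  proof -
    have "summable (eta_term (2 * k + 3))"
      by (simp add: summable_eta_term)
    then show ?thesis
      by (subst suminf_mult) (simp_all add: suminf_eta_term)
  qed
  finally show ?thesis
    by simp
qed

text \<open>\<open>log_kernel \<rho> t = ln \<bar>1 + \<rho> e\<^sup>i\<^sup>t\<bar>\<close>.\<close>
definition log_kernel :: "real \<Rightarrow> real \<Rightarrow> real" where
  "log_kernel \<rho> t = ln (1 + 2 * \<rho> * cos t + \<rho>\<^sup>2) / 2"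

lemma log_kernel_sums:
  assumes "\<bar>\<rho>\<bar> < 1"
  shows "(\<lambda>n. (-1) ^ Suc n / real n * \<rho> ^ n * cos (real n * t)) sums log_kernel \<rho> t"
proof -
  define z where "z = complex_of_real \<rho> * cis t"
  have z: "norm z < 1"
    using assms by (simp add: z_def norm_mult)
  have Re_term: "Re ((-1) ^ Suc n / of_nat n * z ^ n) = (-1) ^ Suc n / real n * \<rho> ^ n * cos (real n * t)" for n
  proof -
    have "z ^ n = complex_of_real (\<rho> ^ n) * cis (real n * t)"
      by (simp add: z_def power_mult_distrib Complex.DeMoivre)
    then have "(-1) ^ Suc n / of_nat n * z ^ n = complex_of_real ((-1) ^ Suc n / real n * \<rho> ^ n) * cis (real n * t)"
      by simp
    then show ?thesis
      by (simp only:) simp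
  qed
  have nonzero: "1 + z \<noteq> 0"
    using z by (metis add.commute add_eq_0_iff norm_minus_cancel norm_one order.irrefl)
  have "(norm (1 + z))\<^sup>2 = 1 + 2 * \<rho> * cos t + \<rho>\<^sup>2"
    unfolding cmod_power2 by (simp add: z_def power2_eq_square algebra_simps)
      (metis sin_cos_squared_add3 distrib_left mult.assoc mult.right_neutral)
  moreover have "ln (norm (1 + z)) = ln ((norm (1 + z))\<^sup>2) / 2"
    using nonzero by (simp add: ln_realpow)
  ultimately have "Re (Ln (1 + z)) = log_kernel \<rho> t"
    using nonzero by (simp add: log_kernel_def)
  then show ?thesis
    using sums_Re[OF Ln_series[OF z]] by (simp only: Re_term)
qed

lemma abs_sum_log_series_le:
  assumes "\<bar>\<rho>\<bar> < 1" and t: "t \<in> {0..pi/2}"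
  shows "\<bar>\<Sum>n<N. (-1) ^ Suc n / real n * \<rho> ^ n * (t ^ m * cos (real n * t))\<bar> \<le> (pi/2) ^ m / (1 - \<bar>\<rho>\<bar>)"
proof -
  have "\<bar>(-1) ^ Suc n / real n * \<rho> ^ n * (t ^ m * cos (real n * t))\<bar> \<le> \<bar>\<rho>\<bar> ^ n * (pi/2) ^ m" for n
  proof -
    have "\<bar>(-1) ^ Suc n / real n :: real\<bar> \<le> 1"
      by (cases n) (auto simp: divide_simps)
    then have "\<bar>(-1) ^ Suc n / real n * \<rho> ^ n\<bar> \<le> \<bar>\<rho>\<bar> ^ n"
      unfolding abs_mult power_abs by (metis abs_ge_zero mult_left_le_one_le zero_le_power)
    moreover have "\<bar>t ^ m * cos (real n * t)\<bar> \<le> (pi/2) ^ m"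
      using t mult_mono[OF _ abs_cos_le_one, of "\<bar>t\<bar> ^ m" "(pi/2) ^ m"]
      by (simp add: abs_mult power_abs power_mono)
    ultimately show ?thesis
      unfolding abs_mult[of "_ * \<rho> ^ n"] by (rule mult_mono) auto
  qed
  then have "\<bar>\<Sum>n<N. (-1) ^ Suc n / real n * \<rho> ^ n * (t ^ m * cos (real n * t))\<bar>
      \<le> (\<Sum>n<N. \<bar>\<rho>\<bar> ^ n) * (pi/2) ^ m"
    unfolding sum_distrib_right by (intro order.trans[OF sum_abs] sum_mono)
  also have "\<dots> \<le> (pi/2) ^ m / (1 - \<bar>\<rho>\<bar>)"
  proof -
    have "(\<Sum>n<N. \<bar>\<rho>\<bar> ^ n) \<le> (\<Sum>n. \<bar>\<rho>\<bar> ^ n)"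
      using assms by (intro sum_le_suminf summable_geometric) auto
    also have "\<dots> = 1 / (1 - \<bar>\<rho>\<bar>)"
      using assms by (simp add: suminf_geometric)
    finally show ?thesis
      by (rule mult_right_mono[THEN order.trans]) simp_all
  qed
  finally show ?thesis .
qed

lemma sums_integral_log_kernel:
  assumes "\<bar>\<rho>\<bar> < 1"
  shows "(\<lambda>n. \<rho> ^ n * log_series_moment m n) sums integral {0..pi/2} (\<lambda>t. t ^ m * log_kernel \<rho> t)"
proof -
  define c where "c n = (-1) ^ Suc n / real n * \<rho> ^ n" for n
  define f where "f N t = (\<Sum>n<N. c n * (t ^ m * cos (real n * t)))" for N t
  have integrable: "f N integrable_on {0..pi/2}" for N
    unfolding f_def by (intro integrable_continuous_interval continuous_intros)
  have integral_f: "integral {0..pi/2} (f N) = (\<Sum>n<N. \<rho> ^ n * log_series_moment m n)" for N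
  proof -
    have "integral {0..pi/2} (f N) = (\<Sum>n<N. integral {0..pi/2} (\<lambda>t. c n * (t ^ m * cos (real n * t))))"
      unfolding f_def by (rule integral_sum) (auto intro!: integrable_continuous_interval continuous_intros)
    then show ?thesis
      by (simp only: integral_mult_right) (simp add: c_def log_series_moment_def mult_ac)
  qed
  have bound: "norm (f N t) \<le> (pi/2) ^ m / (1 - \<bar>\<rho>\<bar>)" if "t \<in> {0..pi/2}" for N t
    using abs_sum_log_series_le[OF assms that] by (simp add: f_def c_def)
  have "(\<lambda>N. f N t) \<longlonglongrightarrow> t ^ m * log_kernel \<rho> t" for t
    using tendsto_mult_left[OF log_kernel_sums[OF assms, of t, unfolded sums_def], of "t ^ m"]
    by (simp add: f_def c_def sum_distrib_left ac_simps)
  then have "(\<lambda>N. integral {0..pi/2} (f N)) \<longlonglongrightarrow> integral {0..pi/2} (\<lambda>t. t ^ m * log_kernel \<rho> t)"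
    by (intro dominated_convergence(2)[OF integrable integrable_const_ivl bound])
  then show ?thesis
    unfolding sums_def integral_f .
qed

lemma tendsto_suminf_power_mult:
  fixes a \<rho> :: "nat \<Rightarrow> real"
  assumes "summable (\<lambda>n. \<bar>a n\<bar>)" "\<rho> \<longlonglongrightarrow> 1" "\<And>k. \<bar>\<rho> k\<bar> \<le> 1"
  shows "(\<lambda>k. \<Sum>n. \<rho> k ^ n * a n) \<longlonglongrightarrow> (\<Sum>n. a n)"
proof -
  have "(\<lambda>k. \<rho> k ^ n * a n) \<longlonglongrightarrow> a n" for n
    using tendsto_mult_right[OF tendsto_power[OF assms(2), of n], of "a n"] by simp
  moreover have "\<forall>\<^sub>F (n, k) in at_top \<times>\<^sub>F sequentially. norm (\<rho> k ^ n * a n) \<le> \<bar>a n\<bar>"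
    using assms(3) by (intro always_eventually) (auto simp: abs_mult power_abs power_le_one mult_left_le_one_le)
  ultimately show ?thesis
    using tannerys_theorem[where a = "\<lambda>n k. \<rho> k ^ n * a n", OF _ _ assms(1) sequentially_bot]
    by blast
qed

lemma quadratic_cos_bounds:
  fixes \<rho> t :: real
  assumes "0 \<le> \<rho>" "\<rho> \<le> 1" "0 \<le> cos t"
  shows "1 \<le> 1 + 2 * \<rho> * cos t + \<rho>\<^sup>2" "1 + 2 * \<rho> * cos t + \<rho>\<^sup>2 \<le> 4"
proof -
  show "1 \<le> 1 + 2 * \<rho> * cos t + \<rho>\<^sup>2"
    using assms by simp
  have "\<rho> * cos t \<le> 1" "\<rho>\<^sup>2 \<le> 1"
    using assms by (auto intro: mult_le_one power_le_one)
  then show "1 + 2 * \<rho> * cos t + \<rho>\<^sup>2 \<le> 4"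
    by simp
qed

lemma tendsto_integral_log_kernel:
  assumes "\<rho> \<longlonglongrightarrow> 1" "\<And>k. 0 \<le> \<rho> k" "\<And>k. \<rho> k \<le> 1"
  shows "(\<lambda>k. integral {0..pi/2} (\<lambda>t. t ^ m * log_kernel (\<rho> k) t))
    \<longlonglongrightarrow> integral {0..pi/2} (\<lambda>t. t ^ m * log_kernel 1 t)"
proof (rule dominated_convergence(2))
  have cos: "0 \<le> cos t" if "t \<in> {0..pi/2}" for t
    using that by (intro cos_ge_zero) auto
  show "(\<lambda>t. t ^ m * log_kernel (\<rho> k) t) integrable_on {0..pi/2}" for k
  proof -
    have "\<forall>t\<in>{0..pi/2}. 1 + 2 * \<rho> k * cos t + (\<rho> k)\<^sup>2 \<noteq> 0"
      using quadratic_cos_bounds(1)[OF assms(2)[of k] assms(3)[of k] cos] by fastforce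
    then show ?thesis
      unfolding log_kernel_def by (intro integrable_continuous_interval continuous_intros) auto
  qed
  show "(\<lambda>t. (pi/2) ^ m * ln 2) integrable_on {0..pi/2}"
    by (rule integrable_const_ivl)
  show "norm (t ^ m * log_kernel (\<rho> k) t) \<le> (pi/2) ^ m * ln 2" if t: "t \<in> {0..pi/2}" for k t
  proof -
    let ?q = "1 + 2 * \<rho> k * cos t + (\<rho> k)\<^sup>2"
    have q: "1 \<le> ?q" "?q \<le> 4"
      using quadratic_cos_bounds[OF assms(2)[of k] assms(3)[of k] cos[OF t]] by auto
    then have "ln ?q \<le> ln (2 ^ 2)"
      by simp
    then have "0 \<le> log_kernel (\<rho> k) t" "log_kernel (\<rho> k) t \<le> ln 2"
      using q by (simp_all only: log_kernel_def ln_realpow) auto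
    moreover have "\<bar>t ^ m\<bar> \<le> (pi/2) ^ m"
      using t by (simp add: power_abs power_mono)
    ultimately show ?thesis
      by (simp add: abs_mult mult_mono)
  qed
  show "(\<lambda>k. t ^ m * log_kernel (\<rho> k) t) \<longlonglongrightarrow> t ^ m * log_kernel 1 t" if "t \<in> {0..pi/2}" for t
    using quadratic_cos_bounds(1)[of 1 t] cos[OF that] unfolding log_kernel_def
    by (intro tendsto_intros assms(1)) auto
qed

lemma log_kernel_one:
  assumes "\<bar>t\<bar> < pi"
  shows "log_kernel 1 t = ln 2 + ln (cos (t/2))"
proof -
  have cos: "0 < cos (t/2)"
    using assms by (intro cos_gt_zero_pi) auto
  have "1 + 2 * 1 * cos t + 1\<^sup>2 = (2 * cos (t/2))\<^sup>2"
    using cos_double_cos[of "t/2"] by (simp add: power_mult_distrib)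
  moreover have "ln (4 :: real) = 2 * ln 2"
    using ln_realpow[of 2 2] by simp
  ultimately show ?thesis
    using cos by (simp add: log_kernel_def ln_realpow ln_mult)
qed

lemma integral_pow:
  assumes "0 \<le> b"
  shows "integral {0..b} (\<lambda>t. t ^ m) = b ^ Suc m / real (Suc m)"
proof -
  have "((\<lambda>t. t ^ m) has_integral b ^ Suc m / real (Suc m) - 0 ^ Suc m / real (Suc m)) {0..b}"
  proof (rule fundamental_theorem_of_calculus)
    fix t
    have "((\<lambda>t. t ^ Suc m / real (Suc m)) has_real_derivative t ^ m) (at t)"
      by (rule derivative_eq_intros refl | simp)+
    then show "((\<lambda>t. t ^ Suc m / real (Suc m)) has_vector_derivative t ^ m) (at t within {0..b})"
      by (simp add: has_real_derivative_iff_has_vector_derivative has_vector_derivative_at_within)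
  qed (use assms in simp)
  then show ?thesis
    by (simp add: integral_unique)
qed

lemma integral_pow_log_kernel_one_eq_suminf:
  "integral {0..pi/2} (\<lambda>t. t ^ m * log_kernel 1 t) = (\<Sum>n. log_series_moment m n)"
proof -
  define \<rho> where "\<rho> k = real k / real (Suc k)" for k
  have \<rho>: "0 \<le> \<rho> k" "\<rho> k < 1" for k
    by (auto simp: \<rho>_def)
  have "\<rho> \<longlonglongrightarrow> 1"
    unfolding \<rho>_def by (rule LIMSEQ_n_over_Suc_n)
  then have "(\<lambda>k. \<Sum>n. \<rho> k ^ n * log_series_moment m n) \<longlonglongrightarrow> (\<Sum>n. log_series_moment m n)"
    and "(\<lambda>k. integral {0..pi/2} (\<lambda>t. t ^ m * log_kernel (\<rho> k) t))
      \<longlonglongrightarrow> integral {0..pi/2} (\<lambda>t. t ^ m * log_kernel 1 t)"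
    using \<rho> by (auto intro!: tendsto_suminf_power_mult summable_abs_log_series_moment
        tendsto_integral_log_kernel simp: abs_le_iff less_imp_le)
  moreover have "(\<Sum>n. \<rho> k ^ n * log_series_moment m n) = integral {0..pi/2} (\<lambda>t. t ^ m * log_kernel (\<rho> k) t)"
    for k
    using \<rho>[of k] by (intro sums_unique[symmetric] sums_integral_log_kernel) auto
  ultimately show ?thesis
    using LIMSEQ_unique by auto
qed

lemma integral_pow_log_kernel_one:
  "integral {0..pi/2} (\<lambda>t. t ^ m * log_kernel 1 t)
    = ln 2 * (pi/2) ^ Suc m / real (Suc m) + integral {0..pi/2} (\<lambda>t. t ^ m * ln (cos (t/2)))"
proof -
  have "integral {0..pi/2} (\<lambda>t. t ^ m * log_kernel 1 t)
      = integral {0..pi/2} (\<lambda>t. ln 2 * t ^ m + t ^ m * ln (cos (t/2)))"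
  proof (rule integral_cong)
    fix t :: real
    assume "t \<in> {0..pi/2}"
    then have "\<bar>t\<bar> < pi"
      using pi_gt_zero by (auto simp del: pi_gt_zero)
    then show "t ^ m * log_kernel 1 t = ln 2 * t ^ m + t ^ m * ln (cos (t/2))"
      by (simp add: log_kernel_one algebra_simps)
  qed
  also have "\<dots> = ln 2 * integral {0..pi/2} (\<lambda>t. t ^ m) + integral {0..pi/2} (\<lambda>t. t ^ m * ln (cos (t/2)))"
  proof (subst integral_add)
    have "0 < cos (t/2)" if "t \<in> {0..pi/2}" for t
      using that pi_gt_zero by (intro cos_gt_zero_pi) (auto simp del: pi_gt_zero)
    then show "(\<lambda>t. t ^ m * ln (cos (t/2))) integrable_on {0..pi/2}"
      by (intro integrable_continuous_interval continuous_intros) (auto simp: less_imp_neq[symmetric])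
  qed (auto intro!: integrable_continuous_interval continuous_intros)
  finally show ?thesis
    by (simp add: integral_pow)
qed

lemma integral_pow_ln_cos_half:
  "integral {0..pi/2} (\<lambda>t. t ^ m * ln (cos (t/2)))
    = (\<Sum>n. log_series_moment m n) - ln 2 * (pi/2) ^ Suc m / real (Suc m)"
  using integral_pow_log_kernel_one[of m] by (simp add: integral_pow_log_kernel_one_eq_suminf)

lemma sum_atMost_split_parity:
  fixes f :: "nat \<Rightarrow> 'a::comm_monoid_add"
  shows "(\<Sum>j\<le>m. f j) = (\<Sum>k=0..m div 2. f (2 * k)) + (\<Sum>k=1..(m + 1) div 2. f (2 * k - 1))"
proof (induction m)
  case 0
  then show ?case by simp
next
  case (Suc m)
  then show ?case
    by (cases "even m") (auto elim!: evenE oddE simp: sum.cl_ivl_Suc add_ac)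
qed

lemma sin_of_nat_add_two_times_pi_half: "sin (real (m + 2) * pi/2) = (-1) ^ m * sin (real m * pi/2)"
proof -
  have "sin (real (m + 2) * pi/2) = - sin (real m * pi/2)"
    using sin_periodic_pi[of "real m * pi/2"] by (simp add: field_simps)
  moreover have "even m \<Longrightarrow> sin (real m * pi/2) = 0"
    by (auto elim!: evenE)
  ultimately show ?thesis
    by (cases "even m") auto
qed

lemma integral_pow_ln_cos_half_eq:
  "integral {0..pi/2} (\<lambda>t. t ^ m * ln (cos (t/2))) =
     - ln 2 / real (m + 1) * (pi/2) ^ (m + 1)
     + fact m * sin (real (m + 2) * pi/2) * zeta_E (real (m + 2))
     + (\<Sum>k=0..m div 2. (-1) ^ k * fact (2 * k) * real (m choose (2 * k)) * (pi/2) ^ (m - 2 * k)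
          * dbeta (real (2 * k + 2)))
     + (\<Sum>k=1..(m + 1) div 2. (-1) ^ (k - 1) * fact (2 * k - 1) / 2 ^ (2 * k + 1)
          * real (m choose (2 * k - 1)) * (pi/2) ^ (m + 1 - 2 * k) * zeta_E (real (2 * k + 1)))"
proof -
  let ?S = "\<lambda>j. \<Sum>n. sin ((real n - real j) * pi/2) * eta_term (j + 2) n"
  have even: "moment_coeff m (2 * k) * ?S (2 * k)
      = (-1) ^ k * fact (2 * k) * real (m choose (2 * k)) * (pi/2) ^ (m - 2 * k) * dbeta (real (2 * k + 2))"
    for k
    unfolding suminf_sin_eta_term_even moment_coeff_def by simp
  have odd: "moment_coeff m (2 * k - 1) * ?S (2 * k - 1)
      = (-1) ^ (k - 1) * fact (2 * k - 1) / 2 ^ (2 * k + 1) * real (m choose (2 * k - 1))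
        * (pi/2) ^ (m + 1 - 2 * k) * zeta_E (real (2 * k + 1))"
    if "k \<in> {1..(m + 1) div 2}" for k
  proof -
    define q where "q = k - 1"
    have q: "2 * k - 1 = 2 * q + 1" "2 * q + 1 + 2 = 2 * q + 3" "2 * k + 1 = 2 * q + 3" "k - 1 = q"
      "m + 1 - 2 * k = m - (2 * q + 1)"
      using that by (auto simp: q_def)
    show ?thesis
      unfolding q suminf_sin_eta_term_odd moment_coeff_def by (simp add: power_add)
  qed
  have odd_sum: "(\<Sum>k=1..(m + 1) div 2. moment_coeff m (2 * k - 1) * ?S (2 * k - 1))
      = (\<Sum>k=1..(m + 1) div 2. (-1) ^ (k - 1) * fact (2 * k - 1) / 2 ^ (2 * k + 1)
          * real (m choose (2 * k - 1)) * (pi/2) ^ (m + 1 - 2 * k) * zeta_E (real (2 * k + 1)))"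
    by (rule sum.cong[OF refl odd])
  show ?thesis
    unfolding integral_pow_ln_cos_half suminf_log_series_moment sum_atMost_split_parity
      odd_sum even sin_of_nat_add_two_times_pi_half
    by (simp add: field_simps)
qed

lemma nat_floor_half: "nat \<lfloor>real m / 2\<rfloor> = m div 2"
  using floor_divide_of_nat_eq[of m 2, where 'a = real] by simp

lemma nat_ceiling_half: "nat \<lceil>real m / 2\<rceil> = (m + 1) div 2"
proof -
  have "\<lceil>real m / 2\<rceil> = - (- int m div 2)"
    using ceiling_divide_eq_div[of "int m" 2] by simp
  also have "\<dots> = int ((m + 1) div 2)"
    by presburger
  finally show ?thesis
    by simp
qed

theorem theorem2p3:
  fixes r :: nat
  assumes "r \<ge> 2"
  shows "integral {0..pi/2} (\<lambda>\<theta>. \<theta> ^ (r - 2) * ln (cos (\<theta> / 2))) =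
     - ln 2 / (real r - 1) * (pi / 2) ^ (r - 1)
     + fact (r - 2) * sin (real r * pi / 2) * zeta_E (real r)
     + (\<Sum>k = 0..nat \<lfloor>(real r - 2) / 2\<rfloor>.
          (-1) ^ k * fact (2 * k) * real ((r - 2) choose (2 * k)) * (pi / 2) ^ (r - 2 * k - 2)
          * dbeta (real (2 * k + 2)))
     + (\<Sum>k = 1..nat \<lceil>(real r - 2) / 2\<rceil>.
          (-1) ^ (k - 1) * fact (2 * k - 1) / 2 ^ (2 * k + 1) * real ((r - 2) choose (2 * k - 1))
          * (pi / 2) ^ (r - 2 * k - 1) * zeta_E (real (2 * k + 1)))"
proof -
  obtain m where r: "r = m + 2"
    using assms le_Suc_ex by (metis add.commute)
  have "real r - 2 = real m" "real r - 1 = real (m + 1)" "r - 1 = m + 1" "r - 2 = m"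
    "\<And>k. r - 2 * k - 2 = m - 2 * k" "\<And>k. r - 2 * k - 1 = m + 1 - 2 * k"
    by (simp_all add: r)
  then show ?thesis
    using integral_pow_ln_cos_half_eq[of m] by (simp add: r nat_floor_half nat_ceiling_half)
qed

end
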